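(* For every finite simple graph $G$, $\mathrm{box}(G)=\mathrm{box}(CC(G))$.
   Context: An axis-parallel $t$-dimensional box is a Cartesian product $R_1\times\cdots\times R_t$ of closed real intervals $R_i=[a_i,b_i]$. The boxicity $\mathrm{box}(G)$ of a graph $G$ is the minimum integer $t$ such that $G$ is the intersection graph of axis-parallel $t$-dimensional boxes, i.e. there is a map $f$ from $V(G)$ to $t$-dimensional boxes with $(u,v)\in E(G)\iff f(u)\cap f(v)\neq\emptyset$ for distinct $u,v$. A critical clique of $G$ is a maximal clique of $G$ all of whose vertices have the same (closed) neighbourhood in $G$. The critical clique graph $CC(G)$ has one vertex for each critical clique of $G$, two such vertices being adjacent iff the union of the two corresponding critical cliques induces a clique in $G$. *)

theory Defs
  imports Complex_Main
begin

definition simple_graph :: "'a set \<Rightarrow> ('a \<Rightarrow> 'a \<Rightarrow> bool) \<Rightarrow> bool" where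
  "simple_graph V E \<longleftrightarrow> finite V \<and> (\<forall>u v. E u v \<longrightarrow> u \<in> V \<and> v \<in> V)
     \<and> (\<forall>u v. E u v \<longrightarrow> E v u) \<and> (\<forall>u. \<not> E u u)"

definition box_set :: "nat \<Rightarrow> (nat \<Rightarrow> real \<times> real) \<Rightarrow> (nat \<Rightarrow> real) set" where
  "box_set t B = {x. (\<forall>i<t. fst (B i) \<le> x i \<and> x i \<le> snd (B i)) \<and> (\<forall>i\<ge>t. x i = 0)}"

definition box_rep :: "nat \<Rightarrow> 'a set \<Rightarrow> ('a \<Rightarrow> 'a \<Rightarrow> bool) \<Rightarrow> bool" where
  "box_rep t V E \<longleftrightarrow> (\<exists>f :: 'a \<Rightarrow> nat \<Rightarrow> real \<times> real.
     (\<forall>v\<in>V. \<forall>i<t. fst (f v i) \<le> snd (f v i)) \<and>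
     (\<forall>u\<in>V. \<forall>v\<in>V. u \<noteq> v \<longrightarrow> (E u v \<longleftrightarrow> box_set t (f u) \<inter> box_set t (f v) \<noteq> {})))"

definition boxicity :: "'a set \<Rightarrow> ('a \<Rightarrow> 'a \<Rightarrow> bool) \<Rightarrow> nat" where
  "boxicity V E = (LEAST t. box_rep t V E)"

definition is_clique :: "'a set \<Rightarrow> ('a \<Rightarrow> 'a \<Rightarrow> bool) \<Rightarrow> 'a set \<Rightarrow> bool" where
  "is_clique V E C \<longleftrightarrow> C \<subseteq> V \<and> (\<forall>u\<in>C. \<forall>v\<in>C. u \<noteq> v \<longrightarrow> E u v)"

definition closed_nbhd :: "'a set \<Rightarrow> ('a \<Rightarrow> 'a \<Rightarrow> bool) \<Rightarrow> 'a \<Rightarrow> 'a set" where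
  "closed_nbhd V E v = insert v {u \<in> V. E v u}"

definition uniform_clique :: "'a set \<Rightarrow> ('a \<Rightarrow> 'a \<Rightarrow> bool) \<Rightarrow> 'a set \<Rightarrow> bool" where
  "uniform_clique V E C \<longleftrightarrow> C \<noteq> {} \<and> is_clique V E C \<and>
     (\<forall>u\<in>C. \<forall>v\<in>C. closed_nbhd V E u = closed_nbhd V E v)"

definition critical_cliques :: "'a set \<Rightarrow> ('a \<Rightarrow> 'a \<Rightarrow> bool) \<Rightarrow> 'a set set" where
  "critical_cliques V E = {C. uniform_clique V E C \<and>
     (\<forall>D. uniform_clique V E D \<and> C \<subseteq> D \<longrightarrow> D = C)}"

definition cc_edge :: "'a set \<Rightarrow> ('a \<Rightarrow> 'a \<Rightarrow> bool) \<Rightarrow> 'a set \<Rightarrow> 'a set \<Rightarrow> bool" where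
  "cc_edge V E C D \<longleftrightarrow> C \<in> critical_cliques V E \<and> D \<in> critical_cliques V E \<and> C \<noteq> D
     \<and> is_clique V E (C \<union> D)"

end

theory Submission
  imports Defs
begin

text \<open>The critical cliques of G are exactly its classes of true twins (vertices with equal
  closed neighbourhoods), and two distinct classes are adjacent in CC(G) iff some (equivalently
  every) pair of representatives is adjacent in G. So G arises from CC(G) by blowing up each
  vertex into a clique of true twins. Such a blow-up preserves box representations in both
  directions: give every twin the box of its class, and conversely give every class the box
  of one representative; boxes of twins are never required to be disjoint.\<close>

definition twin_class :: "'a set \<Rightarrow> ('a \<Rightarrow> 'a \<Rightarrow> bool) \<Rightarrow> 'a \<Rightarrow> 'a set" where
  "twin_class V E v = {u \<in> V. closed_nbhd V E u = closed_nbhd V E v}"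

lemma self_in_twin_class: "v \<in> V \<Longrightarrow> v \<in> twin_class V E v"
  by (simp add: twin_class_def)

lemma twin_class_eq_iff:
  "u \<in> V \<Longrightarrow> v \<in> V \<Longrightarrow> twin_class V E u = twin_class V E v \<longleftrightarrow> closed_nbhd V E u = closed_nbhd V E v"
  by (auto simp: twin_class_def)

lemma adjacent_iff_mem_closed_nbhd:
  assumes "simple_graph V E" "u \<noteq> v"
  shows "E u v \<longleftrightarrow> v \<in> closed_nbhd V E u"
  using assms by (auto simp: closed_nbhd_def simple_graph_def)

lemma mem_closed_nbhd_commute:
  assumes "simple_graph V E" "u \<in> V" "v \<in> V"
  shows "v \<in> closed_nbhd V E u \<longleftrightarrow> u \<in> closed_nbhd V E v"
  using assms by (auto simp: closed_nbhd_def simple_graph_def)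

lemma mem_closed_nbhd_twin_class_iff:
  assumes G: "simple_graph V E" and "u \<in> V" "v \<in> V"
    and a: "a \<in> twin_class V E u" and b: "b \<in> twin_class V E v"
  shows "b \<in> closed_nbhd V E a \<longleftrightarrow> v \<in> closed_nbhd V E u"
proof -
  have "b \<in> V" and Na: "closed_nbhd V E a = closed_nbhd V E u"
    and Nb: "closed_nbhd V E b = closed_nbhd V E v"
    using a b by (auto simp: twin_class_def)
  have "b \<in> closed_nbhd V E a \<longleftrightarrow> u \<in> closed_nbhd V E b"
    using Na mem_closed_nbhd_commute[OF G \<open>u \<in> V\<close> \<open>b \<in> V\<close>] by simp
  also have "\<dots> \<longleftrightarrow> v \<in> closed_nbhd V E u"
    using Nb mem_closed_nbhd_commute[OF G \<open>u \<in> V\<close> \<open>v \<in> V\<close>] by simp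
  finally show ?thesis .
qed

lemma twins_adjacent:
  assumes "closed_nbhd V E u = closed_nbhd V E v" "u \<noteq> v"
  shows "E u v"
proof -
  have "v \<in> closed_nbhd V E v" by (simp add: closed_nbhd_def)
  with assms show ?thesis by (auto simp: closed_nbhd_def)
qed

lemma uniform_clique_twin_class: "v \<in> V \<Longrightarrow> uniform_clique V E (twin_class V E v)"
  unfolding uniform_clique_def is_clique_def twin_class_def
  by (auto intro: twins_adjacent[of V E] simp del: closed_nbhd_def)

lemma uniform_clique_subset_twin_class:
  assumes "uniform_clique V E C" "v \<in> C"
  shows "C \<subseteq> twin_class V E v"
  using assms unfolding uniform_clique_def is_clique_def twin_class_def by blast

lemma critical_cliques_eq_twin_classes: "critical_cliques V E = twin_class V E ` V"
proof (intro equalityI subsetI)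
  fix C assume C: "C \<in> critical_cliques V E"
  then have U: "uniform_clique V E C" and maximal: "\<And>D. uniform_clique V E D \<Longrightarrow> C \<subseteq> D \<Longrightarrow> D = C"
    by (auto simp: critical_cliques_def)
  then obtain v where "v \<in> C" "v \<in> V"
    by (auto simp: uniform_clique_def is_clique_def)
  then have "C = twin_class V E v"
    using maximal[OF uniform_clique_twin_class] uniform_clique_subset_twin_class[OF U] by metis
  with \<open>v \<in> V\<close> show "C \<in> twin_class V E ` V" by blast
next
  fix C assume "C \<in> twin_class V E ` V"
  then obtain v where "v \<in> V" and C: "C = twin_class V E v" by blast
  have "D = C" if "uniform_clique V E D" "C \<subseteq> D" for D
    using uniform_clique_subset_twin_class[OF that(1), of v] that(2) self_in_twin_class[OF \<open>v \<in> V\<close>]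
    unfolding C by blast
  with C uniform_clique_twin_class[OF \<open>v \<in> V\<close>] show "C \<in> critical_cliques V E"
    by (auto simp: critical_cliques_def)
qed

lemma adjacent_iff_cc_edge:
  assumes G: "simple_graph V E" and "u \<in> V" "v \<in> V"
    and ne: "twin_class V E u \<noteq> twin_class V E v"
  shows "E u v \<longleftrightarrow> cc_edge V E (twin_class V E u) (twin_class V E v)"
proof -
  let ?U = "twin_class V E u \<union> twin_class V E v"
  have "u \<noteq> v" using ne by auto
  have "is_clique V E ?U \<longleftrightarrow> v \<in> closed_nbhd V E u"
  proof
    assume "is_clique V E ?U"
    then show "v \<in> closed_nbhd V E u"
      using self_in_twin_class[of u V E] self_in_twin_class[of v V E] \<open>u \<in> V\<close> \<open>v \<in> V\<close>
        \<open>u \<noteq> v\<close> adjacent_iff_mem_closed_nbhd[OF G] unfolding is_clique_def by blast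
  next
    assume uv: "v \<in> closed_nbhd V E u"
    have "u \<in> closed_nbhd V E v"
      using uv mem_closed_nbhd_commute[OF G \<open>u \<in> V\<close> \<open>v \<in> V\<close>] by simp
    moreover have "u \<in> closed_nbhd V E u" "v \<in> closed_nbhd V E v"
      by (simp_all add: closed_nbhd_def)
    ultimately have "b \<in> closed_nbhd V E a" if "a \<in> ?U" "b \<in> ?U" for a b
      using that uv mem_closed_nbhd_twin_class_iff[OF G] \<open>u \<in> V\<close> \<open>v \<in> V\<close> by blast
    moreover have "?U \<subseteq> V" by (auto simp: twin_class_def)
    ultimately show "is_clique V E ?U"
      by (auto simp: is_clique_def adjacent_iff_mem_closed_nbhd[OF G])
  qed
  then show ?thesis
    using ne \<open>u \<in> V\<close> \<open>v \<in> V\<close> adjacent_iff_mem_closed_nbhd[OF G \<open>u \<noteq> v\<close>]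
    by (simp add: cc_edge_def critical_cliques_eq_twin_classes)
qed

lemma box_set_nonempty:
  assumes "\<forall>i<t. fst (B i) \<le> snd (B i)"
  shows "box_set t B \<noteq> {}"
proof -
  have "(\<lambda>i. if i < t then fst (B i) else 0) \<in> box_set t B"
    using assms by (auto simp: box_set_def)
  then show ?thesis by blast
qed

lemma box_rep_quotient:
  assumes W: "h ` V = W"
    and fibre: "\<And>u v. u \<in> V \<Longrightarrow> v \<in> V \<Longrightarrow> u \<noteq> v \<Longrightarrow> h u = h v \<Longrightarrow> E u v"
    and edge: "\<And>u v. u \<in> V \<Longrightarrow> v \<in> V \<Longrightarrow> h u \<noteq> h v \<Longrightarrow> E u v \<longleftrightarrow> F (h u) (h v)"
  shows "box_rep t V E \<longleftrightarrow> box_rep t W F"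
proof
  assume "box_rep t V E"
  then obtain f where f1: "\<forall>v\<in>V. \<forall>i<t. fst (f v i) \<le> snd (f v i)"
    and f2: "\<forall>u\<in>V. \<forall>v\<in>V. u \<noteq> v \<longrightarrow> (E u v \<longleftrightarrow> box_set t (f u) \<inter> box_set t (f v) \<noteq> {})"
    by (auto simp: box_rep_def)
  define r where "r = inv_into V h"
  have r: "r w \<in> V" "h (r w) = w" if "w \<in> W" for w
    using that W by (auto simp: r_def inv_into_into f_inv_into_f)
  have "F C D \<longleftrightarrow> box_set t (f (r C)) \<inter> box_set t (f (r D)) \<noteq> {}"
    if "C \<in> W" "D \<in> W" "C \<noteq> D" for C D
    using that r[OF \<open>C \<in> W\<close>] r[OF \<open>D \<in> W\<close>] edge[of "r C" "r D"] f2 by metis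
  with f1 r show "box_rep t W F"
    unfolding box_rep_def by (intro exI[of _ "f \<circ> r"]) auto
next
  assume "box_rep t W F"
  then obtain g where g1: "\<forall>w\<in>W. \<forall>i<t. fst (g w i) \<le> snd (g w i)"
    and g2: "\<forall>C\<in>W. \<forall>D\<in>W. C \<noteq> D \<longrightarrow> (F C D \<longleftrightarrow> box_set t (g C) \<inter> box_set t (g D) \<noteq> {})"
    by (auto simp: box_rep_def)
  have "E u v \<longleftrightarrow> box_set t (g (h u)) \<inter> box_set t (g (h v)) \<noteq> {}"
    if "u \<in> V" "v \<in> V" "u \<noteq> v" for u v
  proof (cases "h u = h v")
    case True
    then show ?thesis
      using that fibre box_set_nonempty g1 W by auto
  next
    case False
    then show ?thesis
      using that edge g2 W by auto
  qed
  with g1 W show "box_rep t V E"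
    unfolding box_rep_def by (intro exI[of _ "g \<circ> h"]) auto
qed

theorem lemma3:
  fixes V :: "'a set" and E :: "'a \<Rightarrow> 'a \<Rightarrow> bool"
  assumes "simple_graph V E"
  shows "boxicity V E = boxicity (critical_cliques V E) (cc_edge V E)"
proof -
  have "box_rep t V E \<longleftrightarrow> box_rep t (critical_cliques V E) (cc_edge V E)" for t
  proof (rule box_rep_quotient[where h = "twin_class V E"])
    show "twin_class V E ` V = critical_cliques V E"
      by (simp add: critical_cliques_eq_twin_classes)
  next
    fix u v assume "u \<in> V" "v \<in> V" "u \<noteq> v" "twin_class V E u = twin_class V E v"
    then show "E u v" by (simp add: twin_class_eq_iff twins_adjacent)
  next
    fix u v assume "u \<in> V" "v \<in> V" "twin_class V E u \<noteq> twin_class V E v"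
    then show "E u v \<longleftrightarrow> cc_edge V E (twin_class V E u) (twin_class V E v)"
      by (rule adjacent_iff_cc_edge[OF assms])
  qed
  then show ?thesis
    by (simp add: boxicity_def)
qed

end
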